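(* Let $d\ge 2$ be even and let $\mathcal{D}$ be the distribution on $\mathbb{R}^d\times\{\pm1\}$ given by: $y\in\{+1,-1\}$ with probability $1/2$ each, an index $j^*$ chosen uniformly at random from $\{1,\dots,d/2\}$, and $x=y\,e_{j^*}$, where $e_i$ denotes the $i$-th standard basis vector of $\mathbb{R}^d$; write $j^*(x)$ for this index. Define the probability distribution $$\tilde\nu=\frac{1}{d}\sum_{i=1}^{d/2}\left(\delta_{\theta_i}+\delta_{\theta'_i}\right)$$ on $\mathbb{R}\times\mathbb{R}^d\times\mathbb{R}$, where $\theta_i=\left(\frac{1}{\sqrt2},\frac{3}{\sqrt{20}}e_i,\frac{-1}{\sqrt{20}}\right)$ and $\theta'_i=\left(\frac{-1}{\sqrt2},\frac{-3}{\sqrt{20}}e_i,\frac{-1}{\sqrt{20}}\right)$. Then for every $(x,y)$ in the support of $\mathcal{D}$, $\nabla_x\mathcal{L}(\tilde\nu,(x,y)) = c\cdot e_{j^*(x)}$ for some constant $c\neq 0$.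
   Context: For a probability distribution $\nu$ over parameters $(w,r,b)\in\mathbb{R}\times\mathbb{R}^d\times\mathbb{R}$, the network output is $f(\nu,x)=\mathbb{E}_{(w,r,b)\sim\nu}[w\,\phi(\langle r,x\rangle+b)]$ with $\phi(t)=\max(t,0)$, and the cross-entropy loss is $\mathcal{L}(\nu,(x,y))=\log(1+\exp(-y f(\nu,x)))$. $\delta_\theta$ is the point mass at $\theta$, and $\nabla_x\mathcal{L}$ is the gradient of the loss with respect to the input $x$. *)

theory Defs
  imports "HOL-Analysis.Analysis" "HOL-Probability.Probability" "HOL-Library.Numeral_Type"
begin

text \<open>Dimension d = CARD('k bit0) = 2 * CARD('k): an arbitrary even d \<ge> 2.
  Coordinates are indexed by the type 'k bit0, whose elements are 0,1,...,d-1;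
  the paper's index i \<in> {1..d} corresponds to the element of_nat (i - 1).\<close>

definition stdbasis :: "nat \<Rightarrow> (real ^ ('k::finite bit0))" where
  "stdbasis i = axis (of_nat (i - 1)) 1"

definition relu :: "real \<Rightarrow> real" where
  "relu t = max t 0"

definition net :: "(real \<times> ('n::real_inner) \<times> real) measure \<Rightarrow> 'n \<Rightarrow> real" where
  "net \<nu> x = (\<integral>p. (case p of (w, r, b) \<Rightarrow> w * relu (inner r x + b)) \<partial>\<nu>)"

definition loss :: "(real \<times> ('n::real_inner) \<times> real) measure \<Rightarrow> 'n \<times> real \<Rightarrow> real" where
  "loss \<nu> xy = ln (1 + exp (- snd xy * net \<nu> (fst xy)))"

definition dataD :: "((real ^ ('k::finite bit0)) \<times> real) pmf" where
  "dataD = do {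
     y \<leftarrow> pmf_of_set {1, -1 :: real};
     j \<leftarrow> pmf_of_set {1 .. CARD('k bit0) div 2};
     return_pmf (y *\<^sub>R stdbasis j, y) }"

definition jstar :: "(real ^ ('k::finite bit0)) \<Rightarrow> nat" where
  "jstar x = (THE j. j \<in> {1 .. CARD('k bit0) div 2} \<and> (x = stdbasis j \<or> x = - stdbasis j))"

definition theta :: "nat \<Rightarrow> real \<times> (real ^ ('k::finite bit0)) \<times> real" where
  "theta i = (1 / sqrt 2, (3 / sqrt 20) *\<^sub>R stdbasis i, -1 / sqrt 20)"

definition theta' :: "nat \<Rightarrow> real \<times> (real ^ ('k::finite bit0)) \<times> real" where
  "theta' i = (-1 / sqrt 2, (-3 / sqrt 20) *\<^sub>R stdbasis i, -1 / sqrt 20)"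

text \<open>nu~ = (1/d) sum_{i=1}^{d/2} (delta_{theta_i} + delta_{theta'_i}),
  written as: i uniform on {1..d/2}, then theta_i or theta'_i with probability 1/2 each.\<close>
definition nutilde :: "(real \<times> (real ^ ('k::finite bit0)) \<times> real) pmf" where
  "nutilde = do {
     i \<leftarrow> pmf_of_set {1 .. CARD('k bit0) div 2};
     s \<leftarrow> pmf_of_set {True, False};
     return_pmf (if s then theta i else theta' i) }"

end

theory Submission
  imports Defs
begin

(* Near a data point x = y e_j, every coordinate other than j lies within 1/3 of 0, where both
   neurons of each pair theta_i, theta'_i are inactive, while coordinate j lies within 1/3 of
   y = +-1, where exactly one neuron of the j-th pair is active.  So on the ball of radius 1/3
   around x the network is an affine function of <e_j, x'>, the loss is the logistic loss of that
   affine function, and its gradient is a nonzero multiple of e_j. *)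

lemma of_nat_bit0_eq_iff:
  assumes "a < CARD('k::finite bit0)" and "b < CARD('k bit0)"
  shows "(of_nat a :: 'k bit0) = of_nat b \<longleftrightarrow> a = b"
proof -
  have "Rep_bit0 (of_nat n :: 'k bit0) = int n" if "n < CARD('k bit0)" for n
    using that by (simp add: bit0.of_nat_eq bit0.Abs_inverse)
  with assms show ?thesis
    by (metis of_nat_eq_iff)
qed

lemma stdbasis_nth:
  assumes "i \<in> {1..CARD('k::finite bit0)}" and "j \<in> {1..CARD('k bit0)}"
  shows "(stdbasis j :: real ^ 'k bit0) $ of_nat (i - 1) = (if i = j then 1 else 0)"
proof -
  (* Here and below of_nat_diff is disabled: it would turn the index of_nat (i - 1) into
     of_nat i - 1, a subtraction in the ring 'k bit0. *)
  have "(of_nat (i - 1) :: 'k bit0) = of_nat (j - 1) \<longleftrightarrow> i = j"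
    using assms by (subst of_nat_bit0_eq_iff) auto
  then show ?thesis
    by (auto simp: stdbasis_def axis_def simp del: of_nat_diff)
qed

lemma set_pmf_dataD:
  "set_pmf (dataD :: ((real ^ 'k::finite bit0) \<times> real) pmf)
     = {(y *\<^sub>R stdbasis j, y) | y j. y \<in> {1, -1} \<and> j \<in> {1..CARD('k)}}"
  by (auto simp: dataD_def set_bind_pmf)

lemma jstar_scaleR_stdbasis:
  assumes y: "y \<in> {1, -1}" and j: "j \<in> {1..CARD('k::finite)}"
  shows "jstar (y *\<^sub>R stdbasis j :: real ^ 'k bit0) = j"
  unfolding jstar_def
proof (rule the_equality)
  let ?e = "stdbasis :: nat \<Rightarrow> real ^ 'k bit0"
  fix i
  assume "i \<in> {1..CARD('k bit0) div 2} \<and> (y *\<^sub>R ?e j = ?e i \<or> y *\<^sub>R ?e j = - ?e i)"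
  then have i: "i \<in> {1..CARD('k bit0)}" and "y *\<^sub>R ?e j = ?e i \<or> y *\<^sub>R ?e j = - ?e i"
    by auto
  then have "\<bar>(y *\<^sub>R ?e j) $ of_nat (i - 1)\<bar> = 1"
    using stdbasis_nth[of i i, where 'k = 'k] by (elim disjE) (auto simp del: of_nat_diff)
  then show "i = j"
    using y j i stdbasis_nth[of i j, where 'k = 'k] by (auto split: if_splits simp del: of_nat_diff)
qed (use y j in auto)

lemma relu_divide_pos: "c > 0 \<Longrightarrow> relu (t / c) = relu t / c"
  by (simp add: relu_def max_divide_distrib_right)

(* The average output of theta_i and theta'_i when the i-th input coordinate is t;
   sqrt 40 = sqrt 2 * sqrt 20 collects the weight scales. *)
definition neuron_pair :: "real \<Rightarrow> real" where
  "neuron_pair t = (relu (3 * t - 1) - relu (- 3 * t - 1)) / (2 * sqrt 40)"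

lemma neuron_pair_eq_0: "\<bar>t\<bar> \<le> 1 / 3 \<Longrightarrow> neuron_pair t = 0"
  by (simp add: neuron_pair_def relu_def)

lemma neuron_pair_linear:
  assumes "y \<in> {1, -1}" and "y * t \<ge> 1 / 3"
  shows "neuron_pair t = (3 * t - y) / (2 * sqrt 40)"
  using assms by (auto simp: neuron_pair_def relu_def)

lemma net_nutilde:
  fixes x :: "real ^ ('k::finite bit0)"
  shows "net (measure_pmf (nutilde :: (real \<times> (real ^ ('k bit0)) \<times> real) pmf)) x
     = (\<Sum>i=1..CARD('k). neuron_pair (x $ of_nat (i - 1))) / CARD('k)"
proof -
  define neuron :: "real \<times> (real ^ ('k bit0)) \<times> real \<Rightarrow> real"
    where "neuron = (\<lambda>(w, r, b). w * relu (inner r x + b))"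
  have sqrt40: "sqrt 40 = sqrt 2 * sqrt 20"
    by (simp flip: real_sqrt_mult)
  have pair: "(neuron (theta i) + neuron (theta' i)) / 2 = neuron_pair (x $ of_nat (i - 1))" for i
  proof -
    let ?t = "x $ of_nat (i - 1)"
    have "neuron (theta i) = relu ((3 * ?t - 1) / sqrt 20) / sqrt 2"
      "neuron (theta' i) = - relu ((- 3 * ?t - 1) / sqrt 20) / sqrt 2"
      by (auto simp: neuron_def theta_def theta'_def stdbasis_def inner_axis' diff_divide_distrib
          intro!: arg_cong[where f = relu])
    then show ?thesis
      by (simp add: relu_divide_pos neuron_pair_def sqrt40 field_simps)
  qed
  have "net (measure_pmf nutilde) x
      = (\<Sum>i=1..CARD('k). (neuron (theta i) + neuron (theta' i)) / 2) / CARD('k)"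
    unfolding net_def nutilde_def neuron_def[symmetric]
    by (simp add: pmf_expectation_bind_pmf_of_set sum_divide_distrib sum_distrib_left field_simps)
  then show ?thesis
    by (simp only: pair)
qed

lemma net_nutilde_near_data:
  fixes x :: "real ^ ('k::finite bit0)"
  assumes y: "y \<in> {1, -1}" and j: "j \<in> {1..CARD('k)}" and near: "dist x (y *\<^sub>R stdbasis j) < 1 / 3"
  shows "net (measure_pmf (nutilde :: (real \<times> (real ^ ('k bit0)) \<times> real) pmf)) x
     = (3 * inner (stdbasis j) x - y) / (2 * sqrt 40 * CARD('k))"
proof -
  have coord: "\<bar>x $ of_nat (i - 1) - y * (if i = j then 1 else 0)\<bar> < 1 / 3" if "i \<in> {1..CARD('k)}" for i
    using component_le_norm_cart[of "x - y *\<^sub>R stdbasis j" "of_nat (i - 1)"] near that j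
      stdbasis_nth[of i j, where 'k = 'k]
    by (simp add: dist_norm del: of_nat_diff)
  have "(\<Sum>i=1..CARD('k). neuron_pair (x $ of_nat (i - 1)))
      = (\<Sum>i\<in>{j}. neuron_pair (x $ of_nat (i - 1)))"
  proof (rule sum.mono_neutral_right)
    show "\<forall>i\<in>{1..CARD('k)} - {j}. neuron_pair (x $ of_nat (i - 1)) = 0"
    proof
      fix i
      assume "i \<in> {1..CARD('k)} - {j}"
      then show "neuron_pair (x $ of_nat (i - 1)) = 0"
        using coord[of i] by (intro neuron_pair_eq_0) auto
    qed
  qed (use j in auto)
  also have "\<dots> = neuron_pair (x $ of_nat (j - 1))"
    by simp
  also have "\<dots> = (3 * x $ of_nat (j - 1) - y) / (2 * sqrt 40)"
  proof (rule neuron_pair_linear[OF y])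
    show "y * x $ of_nat (j - 1) \<ge> 1 / 3"
      using coord[OF j] y by (auto simp: abs_if split: if_splits)
  qed
  finally show ?thesis
    by (simp add: net_nutilde stdbasis_def inner_axis' del: of_nat_diff)
qed

lemma gderiv_logistic_affine:
  fixes w x :: "'a::real_inner"
  shows "GDERIV (\<lambda>x. ln (1 + exp (- y * (inner w x + b)))) x
           :> (- y / (1 + exp (y * (inner w x + b)))) *\<^sub>R w"
proof -
  have affine: "GDERIV (\<lambda>x. inner w x + b) x :> w"
    unfolding gderiv_def by (auto intro!: derivative_eq_intros simp: inner_commute)
  have "DERIV (\<lambda>u. ln (1 + exp (- y * u))) u :> - y / (1 + exp (y * u))" for u
    by (auto intro!: derivative_eq_intros simp: add_pos_pos field_simps exp_minus)
  then show ?thesis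
    by (rule GDERIV_DERIV_compose[OF affine])
qed

lemma gderiv_transform_within_open:
  assumes "GDERIV f x :> D" and "open S" and "x \<in> S" and "\<And>x'. x' \<in> S \<Longrightarrow> f x' = g x'"
  shows "GDERIV g x :> D"
  using assms unfolding gderiv_def by (rule has_derivative_transform_within_open)

theorem mainTheorem2:
  fixes x :: "real ^ ('k::finite bit0)" and y :: real
  assumes "(x, y) \<in> set_pmf (dataD :: ((real ^ ('k bit0)) \<times> real) pmf)"
  shows "\<exists>c. c \<noteq> 0 \<and>
    GDERIV (\<lambda>x'. loss (measure_pmf (nutilde :: (real \<times> (real ^ ('k bit0)) \<times> real) pmf)) (x', y)) x
      :> c *\<^sub>R (stdbasis (jstar x) :: real ^ ('k bit0))"
proof -
  from assms obtain j where y: "y \<in> {1, -1}" and j: "j \<in> {1..CARD('k)}" and x: "x = y *\<^sub>R stdbasis j"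
    by (auto simp: set_pmf_dataD)
  define C where "C = 2 * sqrt 40 * CARD('k)"
  define w :: "real ^ 'k bit0" where "w = (3 / C) *\<^sub>R stdbasis j"
  define c where "c = - y / (1 + exp (y * (inner w x + - y / C))) * (3 / C)"
  have "c \<noteq> 0"
    using y by (auto simp: c_def C_def add_nonneg_eq_0_iff)
  have near_data: "loss (measure_pmf nutilde) (x', y) = ln (1 + exp (- y * (inner w x' + - y / C)))"
    if "x' \<in> ball x (1 / 3)" for x'
    using net_nutilde_near_data[OF y j] that
    by (simp add: loss_def x w_def C_def dist_commute diff_divide_distrib)
  have "GDERIV (\<lambda>x'. ln (1 + exp (- y * (inner w x' + - y / C)))) x
      :> (- y / (1 + exp (y * (inner w x + - y / C)))) *\<^sub>R w"
    by (rule gderiv_logistic_affine)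
  moreover have "(- y / (1 + exp (y * (inner w x + - y / C)))) *\<^sub>R w = c *\<^sub>R stdbasis j"
    by (simp add: c_def w_def)
  ultimately have "GDERIV (\<lambda>x'. loss (measure_pmf nutilde) (x', y)) x :> c *\<^sub>R stdbasis j"
    using gderiv_transform_within_open[of _ x _ "ball x (1 / 3)"] near_data by simp
  with \<open>c \<noteq> 0\<close> show ?thesis
    using jstar_scaleR_stdbasis[OF y j] x by auto
qed

end
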